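(* Fix a positive integer $k$. For all real $\tilde c_0$ and $A_1$, and for every $n\ge0$ and every sequence $s$ of non-negative integers with finitely many nonzero terms, the number $B^n_s$ computed with $w=\tilde c_{k-1}$ is homogeneous of degree $|s|$ in $A_1$: there is a number $\beta^n_s(k)$, depending only on $n,s,k$ (not on $\tilde c_0$ or $A_1$), with $B^n_s=\beta^n_s(k)\,A_1^{|s|}$.
   Context: Given real numbers $\tilde c_0,A_1,w$, set $\tilde c_j=\tilde c_0-jA_1$ for all integers $j$. Sequences $s=(s_0,s_1,\dots)$ are integer sequences with finitely many nonzero terms; $(0)$ the zero sequence; $|s|=\sum s_i$, $[s]=\sum s_i(i+1)$; $\sigma_0=(1,0,0,\dots)$, and for $i\ge1$, $\sigma_i$ has $-1$ at position $i-1$, $+1$ at position $i$, $0$ elsewhere. For $n\ge0$ and $s$ with non-negative entries, $B^n_s$ is defined by induction on $n+[s]$: $B^0_{(0)}=1$, and otherwise $B^n_s=(1-\delta_{s_0,0})(n+|s|-1)(\tilde c_{n+|s|-2}-w)\sum_{l=0}^{n-1}B^l_{s-\sigma_0}+\sum_{i\ge1}(1-\delta_{s_i,0})(s_{i-1}+1)\sum_{l=0}^{n-1}B^l_{s-\sigma_i}$ (empty sums vanish). *)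

theory Defs
  imports Main "HOL.Real"
begin

text \<open>Sequences are represented as functions nat \<Rightarrow> nat (non-negative entries);
  finite support is assumed where needed.\<close>

definition ctil :: "real \<Rightarrow> real \<Rightarrow> int \<Rightarrow> real" where
  "ctil c0 A1 j = c0 - real_of_int j * A1"

definition seq_abs :: "(nat \<Rightarrow> nat) \<Rightarrow> nat" where
  "seq_abs s = (\<Sum>i\<in>{i. s i \<noteq> 0}. s i)"

definition seq_wt :: "(nat \<Rightarrow> nat) \<Rightarrow> nat" where
  "seq_wt s = (\<Sum>i\<in>{i. s i \<noteq> 0}. s i * (i + 1))"

definition minus_sigma :: "(nat \<Rightarrow> nat) \<Rightarrow> nat \<Rightarrow> (nat \<Rightarrow> nat)" where
  "minus_sigma s i = (if i = 0 then s(0 := s 0 - 1)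
                      else s(i - 1 := s (i - 1) + 1, i := s i - 1))"

text \<open>Fuel-bounded version of the recursion; the recursion for B^n_s is on n + [s],
  so fuel n + [s] + 1 always suffices.\<close>
primrec Bf :: "real \<Rightarrow> real \<Rightarrow> real \<Rightarrow> nat \<Rightarrow> nat \<Rightarrow> (nat \<Rightarrow> nat) \<Rightarrow> real" where
  "Bf c0 A1 w 0 n s = 0"
| "Bf c0 A1 w (Suc f) n s =
     (if n = 0 \<and> (\<forall>i. s i = 0) then 1
      else (if s 0 \<noteq> 0 then
              real_of_int (int n + int (seq_abs s) - 1)
              * (ctil c0 A1 (int n + int (seq_abs s) - 2) - w)
              * (\<Sum>l<n. Bf c0 A1 w f l (minus_sigma s 0))
            else 0)
         + (\<Sum>i\<in>{i. 1 \<le> i \<and> s i \<noteq> 0}.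
              real (s (i - 1) + 1) * (\<Sum>l<n. Bf c0 A1 w f l (minus_sigma s i))))"

definition Bcoef :: "real \<Rightarrow> real \<Rightarrow> real \<Rightarrow> nat \<Rightarrow> (nat \<Rightarrow> nat) \<Rightarrow> real" where
  "Bcoef c0 A1 w n s = Bf c0 A1 w (n + seq_wt s + 1) n s"

end

theory Submission
  imports Defs
begin

(* With w = ctil (k - 1), the parameters enter the recursion only through
   ctil (n + |s| - 2) - w = (k + 1 - n - |s|) * A1, in which c0 cancels. This factor
   occurs exactly in the sigma_0 branch, which lowers |s| by one, while the sigma_i
   branches (i >= 1) preserve |s|. Hence, by induction along the recursion,
   B^n_s(c0, A1) = B^n_s(0, 1) * A1^|s|, and beta^n_s(k) = B^n_s(0, 1) works; the argument
   needs no sign condition on k. *)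

lemma finite_support_fun_upd:
  assumes "finite {i. s i \<noteq> 0}"
  shows "finite {j. (s(i := v)) j \<noteq> 0}"
  by (rule finite_subset[where B = "insert i {i. s i \<noteq> 0}"]) (use assms in auto)

lemma minus_sigma_0: "minus_sigma s 0 = s(0 := s 0 - 1)"
  by (simp add: minus_sigma_def)

lemma minus_sigma_pos:
  "1 \<le> i \<Longrightarrow> minus_sigma s i = s(i - 1 := s (i - 1) + 1, i := s i - 1)"
  by (simp add: minus_sigma_def)

lemma finite_support_minus_sigma:
  assumes "finite {i. s i \<noteq> 0}"
  shows "finite {j. minus_sigma s i j \<noteq> 0}"
proof (cases "i = 0")
  case True
  show ?thesis unfolding True minus_sigma_0 by (intro finite_support_fun_upd assms)
next
  case False
  then have "1 \<le> i" by simp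
  show ?thesis unfolding minus_sigma_pos[OF \<open>1 \<le> i\<close>] by (intro finite_support_fun_upd assms)
qed

lemma seq_abs_eq_sum:
  assumes "finite S" "{i. s i \<noteq> 0} \<subseteq> S"
  shows "seq_abs s = sum s S"
  unfolding seq_abs_def by (rule sum.mono_neutral_left) (use assms in auto)

lemma sum_fun_upd_add:
  fixes f :: "'a \<Rightarrow> 'b :: comm_monoid_add"
  assumes "finite S" "i \<in> S"
  shows "sum (f(i := v)) S + f i = sum f S + v"
proof -
  have "sum (f(i := v)) (S - {i}) = sum f (S - {i})"
    by (rule sum.cong) auto
  then show ?thesis
    using sum.remove[OF assms, of "f(i := v)"] sum.remove[OF assms, of f] by (simp add: ac_simps)
qed

lemma seq_abs_fun_upd:
  assumes "finite {i. s i \<noteq> 0}"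
  shows "seq_abs (s(i := v)) + s i = seq_abs s + v"
proof -
  let ?S = "insert i {i. s i \<noteq> 0}"
  have "seq_abs s = sum s ?S" "seq_abs (s(i := v)) = sum (s(i := v)) ?S"
    by (rule seq_abs_eq_sum; use assms in auto)+
  then show ?thesis using sum_fun_upd_add[of ?S i s v] assms by simp
qed

lemma seq_abs_minus_sigma_0:
  assumes "finite {i. s i \<noteq> 0}" "s 0 \<noteq> 0"
  shows "seq_abs s = Suc (seq_abs (minus_sigma s 0))"
  using seq_abs_fun_upd[OF assms(1), of 0 "s 0 - 1"] assms(2)
  by (simp add: minus_sigma_0)

lemma seq_abs_minus_sigma:
  assumes "finite {i. s i \<noteq> 0}" "1 \<le> i" "s i \<noteq> 0"
  shows "seq_abs (minus_sigma s i) = seq_abs s"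
proof -
  let ?t = "s(i - 1 := s (i - 1) + 1)"
  have "seq_abs ?t + s (i - 1) = seq_abs s + (s (i - 1) + 1)"
    by (rule seq_abs_fun_upd[OF assms(1)])
  moreover have "seq_abs (?t(i := s i - 1)) + ?t i = seq_abs ?t + (s i - 1)"
    by (rule seq_abs_fun_upd[OF finite_support_fun_upd[OF assms(1)]])
  moreover have "?t i = s i"
    using assms(2) by simp
  ultimately show ?thesis
    using assms(3) by (simp only: minus_sigma_pos[OF assms(2)]) linarith
qed

lemma ctil_diff: "ctil c0 A1 i - ctil c0 A1 j = real_of_int (j - i) * A1"
  by (simp add: ctil_def algebra_simps)

lemma Bf_ctil_homogeneous:
  assumes "finite {i. s i \<noteq> 0}"
  shows "Bf c0 A1 (ctil c0 A1 j) f n s = Bf 0 1 (ctil 0 1 j) f n s * A1 ^ seq_abs s"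
  using assms
proof (induction f arbitrary: n s)
  case 0
  show ?case by simp
next
  case (Suc f)
  let ?B = "Bf c0 A1 (ctil c0 A1 j) f" and ?B1 = "Bf 0 1 (ctil 0 1 j) f"
  have IH: "(\<Sum>l<n. ?B l (minus_sigma s i))
      = (\<Sum>l<n. ?B1 l (minus_sigma s i)) * A1 ^ seq_abs (minus_sigma s i)" for i
    using Suc.IH[OF finite_support_minus_sigma[OF Suc.prems]] by (simp add: sum_distrib_right)
  show ?case
  proof (cases "n = 0 \<and> (\<forall>i. s i = 0)")
    case True
    then show ?thesis by (simp add: seq_abs_def)
  next
    case False
    let ?m = "seq_abs s"
    have head:
      "(if s 0 \<noteq> 0 then real_of_int (int n + int ?m - 1)
          * (ctil c0 A1 (int n + int ?m - 2) - ctil c0 A1 j) * (\<Sum>l<n. ?B l (minus_sigma s 0))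
        else 0)
     = (if s 0 \<noteq> 0 then real_of_int (int n + int ?m - 1)
          * (ctil 0 1 (int n + int ?m - 2) - ctil 0 1 j) * (\<Sum>l<n. ?B1 l (minus_sigma s 0))
        else 0) * A1 ^ ?m"
      by (cases "s 0 = 0")
        (simp_all add: IH ctil_diff seq_abs_minus_sigma_0[OF Suc.prems] del: of_int_diff)
    have tail:
      "(\<Sum>i\<in>{i. 1 \<le> i \<and> s i \<noteq> 0}. real (s (i - 1) + 1) * (\<Sum>l<n. ?B l (minus_sigma s i)))
     = (\<Sum>i\<in>{i. 1 \<le> i \<and> s i \<noteq> 0}. real (s (i - 1) + 1) * (\<Sum>l<n. ?B1 l (minus_sigma s i)))
        * A1 ^ ?m"
      unfolding sum_distrib_right
      by (rule sum.cong) (simp_all add: IH seq_abs_minus_sigma[OF Suc.prems])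
    show ?thesis
      by (simp only: Bf.simps if_not_P[OF False] head tail distrib_right)
  qed
qed

lemma Bcoef_ctil_homogeneous:
  assumes "finite {i. s i \<noteq> 0}"
  shows "Bcoef c0 A1 (ctil c0 A1 j) n s = Bcoef 0 1 (ctil 0 1 j) n s * A1 ^ seq_abs s"
  unfolding Bcoef_def using assms by (rule Bf_ctil_homogeneous)

theorem lemma7p8:
  fixes k :: nat
  assumes "k > 0"
  shows "\<exists>\<beta> :: nat \<Rightarrow> (nat \<Rightarrow> nat) \<Rightarrow> real.
           \<forall>(c0::real) (A1::real) (n::nat) (s::nat \<Rightarrow> nat).
             finite {i. s i \<noteq> 0} \<longrightarrow>
             Bcoef c0 A1 (ctil c0 A1 (int k - 1)) n s = \<beta> n s * A1 ^ seq_abs s"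
proof
  show "\<forall>c0 A1 n s. finite {i. s i \<noteq> 0} \<longrightarrow>
      Bcoef c0 A1 (ctil c0 A1 (int k - 1)) n s
        = Bcoef 0 1 (ctil 0 1 (int k - 1)) n s * A1 ^ seq_abs s"
    by (intro allI impI Bcoef_ctil_homogeneous)
qed

end
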